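(* Let $L_s,L_t\ge 0$ be integers and $M,N$ positive integers with $\gcd(M,N)=1$, and suppose $N<L_t+1$ and $M<L_s+1$. Let $\bm\Omega_s$ be the $(L_t+1)\times(L_s+1)$ matrix with $(l,p)$-th entry $lM+pN$, $0\le l\le L_t$, $0\le p\le L_s$. Then the number of holes of $\bm\Omega_s$, i.e. the number of integers in $[0, L_tM+L_sN]$ that are not equal to any entry of $\bm\Omega_s$, is $(M-1)(N-1)$. *)

theory Defs
  imports Main
begin

definition omega_entries :: "nat \<Rightarrow> nat \<Rightarrow> nat \<Rightarrow> nat \<Rightarrow> nat set" where
  "omega_entries Lt Ls M N = {l * M + p * N | l p. l \<le> Lt \<and> p \<le> Ls}"

definition holes :: "nat \<Rightarrow> nat \<Rightarrow> nat \<Rightarrow> nat \<Rightarrow> nat set" where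
  "holes Lt Ls M N = {0 .. Lt * M + Ls * N} - omega_entries Lt Ls M N"

end

theory Submission
  imports Defs
begin

text \<open>
  Whenever l \<ge> N and p + M \<le> L_s, the pair
  (l - N, p + M) is another index with the same entry l M + p N; discarding all such
  shiftable pairs leaves every entry with exactly one index, since by coprimality two
  indices with equal entries differ by a multiple of (N, -M). Hence there are
  (L_t+1)(L_s+1) - (L_t+1-N)(L_s+1-M) distinct entries, and counting the remaining
  integers of [0, L_t M + L_s N] gives (M-1)(N-1) holes.
\<close>

definition canonical_indices :: "nat \<Rightarrow> nat \<Rightarrow> nat \<Rightarrow> nat \<Rightarrow> (nat \<times> nat) set" where
  "canonical_indices Lt Ls M N = {..Lt} \<times> {..Ls} - {N..Lt} \<times> {p. p + M \<le> Ls}"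

lemma card_canonical_indices:
  "card (canonical_indices Lt Ls M N) = (Lt + 1) * (Ls + 1) - (Lt + 1 - N) * (Ls + 1 - M)"
proof -
  have "{p. p + M \<le> Ls} = {..<Ls + 1 - M}" by auto
  then have "card ({N..Lt} \<times> {p. p + M \<le> Ls}) = (Lt + 1 - N) * (Ls + 1 - M)"
    by (simp add: card_cartesian_product)
  moreover have "{N..Lt} \<times> {p. p + M \<le> Ls} \<subseteq> {..Lt} \<times> {..Ls}" by auto
  ultimately show ?thesis
    unfolding canonical_indices_def
    by (simp only: card_Diff_subset finite_subset finite_cartesian_product finite_atMost
        card_cartesian_product card_atMost Suc_eq_plus1)
qed

lemma lincomb_eq_imp_shift:
  fixes M N l l' p p' :: nat
  assumes "coprime M N" and "M > 0" and "N > 0" and "l < l'"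
    and "l * M + p * N = l' * M + p' * N"
  shows "l + N \<le> l' \<and> p' + M \<le> p"
proof -
  have shift_eq: "(l' - l) * M = (p - p') * N"
    using assms(4,5) by (simp add: diff_mult_distrib)
  then have "N dvd (l' - l) * M" by simp
  with \<open>coprime M N\<close> have "N dvd l' - l"
    by (simp add: coprime_commute coprime_dvd_mult_left_iff)
  with \<open>l < l'\<close> have "N \<le> l' - l" by (simp add: dvd_imp_le)
  then have "N * M \<le> (p - p') * N" using shift_eq by (metis mult_le_mono1)
  with \<open>N > 0\<close> have "M \<le> p - p'" by (simp add: mult.commute)
  with \<open>N \<le> l' - l\<close> \<open>l < l'\<close> \<open>M > 0\<close> show ?thesis by arith
qed

lemma inj_on_canonical_indices:
  assumes "coprime M N" and "M > 0" and "N > 0"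
  shows "inj_on (\<lambda>(l, p). l * M + p * N) (canonical_indices Lt Ls M N)"
proof -
  have equal_entry_not_less:
    "False" if "(l, p) \<in> canonical_indices Lt Ls M N" "(l', p') \<in> canonical_indices Lt Ls M N"
      "l * M + p * N = l' * M + p' * N" "l < l'" for l p l' p'
  proof -
    from lincomb_eq_imp_shift[OF assms that(4,3)]
    have "N \<le> l'" "p' + M \<le> p" by auto
    with that(1,2) show False unfolding canonical_indices_def by auto
  qed
  show ?thesis
  proof (rule inj_onI, clarify)
    fix l p l' p'
    assume idx: "(l, p) \<in> canonical_indices Lt Ls M N" "(l', p') \<in> canonical_indices Lt Ls M N"
      and eq: "l * M + p * N = l' * M + p' * N"
    have "l = l'"
      using equal_entry_not_less[OF idx eq] equal_entry_not_less[OF idx(2,1) eq[symmetric]]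
      by (cases l l' rule: linorder_cases) auto
    with eq \<open>N > 0\<close> show "l = l' \<and> p = p'" by simp
  qed
qed

lemma omega_entries_eq_image_canonical_indices:
  assumes "N > 0"
  shows "omega_entries Lt Ls M N = (\<lambda>(l, p). l * M + p * N) ` canonical_indices Lt Ls M N"
proof
  show "(\<lambda>(l, p). l * M + p * N) ` canonical_indices Lt Ls M N \<subseteq> omega_entries Lt Ls M N"
    unfolding canonical_indices_def omega_entries_def by auto
next
  have "l * M + p * N \<in> (\<lambda>(l, p). l * M + p * N) ` canonical_indices Lt Ls M N"
    if "l \<le> Lt" "p \<le> Ls" for l p
    using that
  proof (induction l arbitrary: p rule: less_induct)
    case (less l)
    show ?case
    proof (cases "N \<le> l \<and> p + M \<le> Ls")
      case True
      then obtain k where "l = N + k" using le_Suc_ex by blast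
      then have "(l - N) * M + (p + M) * N = l * M + p * N"
        by (simp add: algebra_simps)
      with True less.IH[of "l - N" "p + M"] \<open>N > 0\<close> less.prems show ?thesis by simp
    next
      case False
      with less.prems have "(l, p) \<in> canonical_indices Lt Ls M N"
        unfolding canonical_indices_def by auto
      then show ?thesis by force
    qed
  qed
  then show "omega_entries Lt Ls M N \<subseteq> (\<lambda>(l, p). l * M + p * N) ` canonical_indices Lt Ls M N"
    unfolding omega_entries_def by blast
qed

lemma card_holes:
  "card (holes Lt Ls M N) = Lt * M + Ls * N + 1 - card (omega_entries Lt Ls M N)"
proof -
  have "omega_entries Lt Ls M N \<subseteq> {0 .. Lt * M + Ls * N}"
    unfolding omega_entries_def by (auto intro!: add_mono)
  then show ?thesis
    unfolding holes_def by (simp add: card_Diff_subset finite_subset)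
qed

lemma holes_count_arith:
  fixes Lt Ls M N :: nat
  assumes "0 < M" "0 < N" "N \<le> Lt + 1" "M \<le> Ls + 1"
  shows "Lt * M + Ls * N + 1 - ((Lt + 1) * (Ls + 1) - (Lt + 1 - N) * (Ls + 1 - M))
    = (M - 1) * (N - 1)"
proof -
  obtain a b where "Lt + 1 = N + a" "Ls + 1 = M + b"
    using assms(3,4) le_Suc_ex by blast
  moreover obtain m n where "M = m + 1" "N = n + 1"
    using assms(1,2) by (metis Suc_eq_plus1 gr0_implies_Suc)
  ultimately have "Lt = n + a" "Ls = m + b" "M = m + 1" "N = n + 1" by simp_all
  then show ?thesis by (simp add: algebra_simps)
qed

theorem lemma2:
  fixes Lt Ls M N :: nat
  assumes "M > 0" and "N > 0" and "gcd M N = 1"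
    and "N < Lt + 1" and "M < Ls + 1"
  shows "card (holes Lt Ls M N) = (M - 1) * (N - 1)"
proof -
  have "coprime M N" using \<open>gcd M N = 1\<close> by (simp add: coprime_iff_gcd_eq_1)
  then have "card (omega_entries Lt Ls M N) = card (canonical_indices Lt Ls M N)"
    using omega_entries_eq_image_canonical_indices[OF \<open>N > 0\<close>]
      inj_on_canonical_indices[OF _ \<open>M > 0\<close> \<open>N > 0\<close>] card_image by metis
  then show ?thesis
    using holes_count_arith assms
    by (simp add: card_holes card_canonical_indices)
qed

end
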